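(* Let $k$ be a field of characteristic different from $2$, and let $(S,E)$ and $(S',E')$ be finite simple graphs. If the Lie algebras $\mathfrak{n}(S,E)$ and $\mathfrak{n}(S',E')$ over $k$ are isomorphic as Lie algebras, then the graphs $(S,E)$ and $(S',E')$ are isomorphic.
   Context: A finite simple graph $(S,E)$ has finite vertex set $S$ and edge set $E$ consisting of unordered pairs $\alpha\beta$ of distinct vertices (no loops, no multiple edges). Given such a graph and a field $k$ with $\mathrm{char}(k)\neq 2$, let $V$ be the $k$-vector space with basis $S$, and let $W\subseteq \bigwedge^2 V$ be the subspace spanned by all $\alpha\wedge\beta$ with $\alpha,\beta\in S$, $\alpha\neq\beta$ and $\alpha\beta\notin E$. The Lie algebra $\mathfrak{n}(S,E)$ is the vector space $V\oplus (\bigwedge^2V)/W$ with bracket determined by $[v_1,v_2]=v_1\wedge v_2 \bmod W$ for $v_1,v_2\in V$ and $[x,y]=0$ for $x\in\mathfrak{n}(S,E)$, $y\in(\bigwedge^2V)/W$ (extended bilinearly and skew-symmetrically). It has dimension $|S|+|E|$. *)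

theory Defs
  imports Main
begin

definition simple_graph :: "'a set \<Rightarrow> 'a set set \<Rightarrow> bool" where
  "simple_graph S E \<longleftrightarrow> finite S \<and>
     (\<forall>e\<in>E. \<exists>x y. x \<in> S \<and> y \<in> S \<and> x \<noteq> y \<and> e = {x, y})"

definition graph_iso :: "'a set \<Rightarrow> 'a set set \<Rightarrow> 'b set \<Rightarrow> 'b set set \<Rightarrow> bool" where
  "graph_iso S E S' E' \<longleftrightarrow> (\<exists>g. bij_betw g S S' \<and>
     (\<forall>x\<in>S. \<forall>y\<in>S. {x, y} \<in> E \<longleftrightarrow> {g x, g y} \<in> E'))"

text \<open>Concrete model of n(S,E) = V (+) (wedge^2 V)/W.  An element is a pair (u, w):
  u : coefficients of v in V (supported on S);
  w : skew-symmetric coefficient function on ordered pairs, supported on edges,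
      representing sum over edges {x,y} of w(x,y) x/\y mod W (w(x,y) = - w(y,x)).\<close>
type_synonym ('a, 'k) nla = "('a \<Rightarrow> 'k) \<times> ('a \<times> 'a \<Rightarrow> 'k)"

definition nla_carrier :: "'a set \<Rightarrow> 'a set set \<Rightarrow> ('a, 'k::field) nla set" where
  "nla_carrier S E = {(u, w). (\<forall>x. x \<notin> S \<longrightarrow> u x = 0) \<and>
      (\<forall>x y. w (x, y) = - w (y, x)) \<and> (\<forall>x y. {x, y} \<notin> E \<longrightarrow> w (x, y) = 0)}"

definition nla_add :: "('a, 'k::field) nla \<Rightarrow> ('a, 'k) nla \<Rightarrow> ('a, 'k) nla" where
  "nla_add p q = (\<lambda>x. fst p x + fst q x, \<lambda>z. snd p z + snd q z)"

definition nla_smul :: "'k::field \<Rightarrow> ('a, 'k) nla \<Rightarrow> ('a, 'k) nla" where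
  "nla_smul c p = (\<lambda>x. c * fst p x, \<lambda>z. c * snd p z)"

text \<open>[v1 + c1, v2 + c2] = v1 /\ v2 mod W; coefficient of x/\y is u1 x u2 y - u1 y u2 x.\<close>
definition nla_bracket :: "'a set set \<Rightarrow> ('a, 'k::field) nla \<Rightarrow> ('a, 'k) nla \<Rightarrow> ('a, 'k) nla" where
  "nla_bracket E p q = (\<lambda>_. 0,
     \<lambda>(x, y). if {x, y} \<in> E then fst p x * fst q y - fst p y * fst q x else 0)"

definition nla_iso :: "'a set \<Rightarrow> 'a set set \<Rightarrow> 'b set \<Rightarrow> 'b set set
    \<Rightarrow> (('a, 'k::field) nla \<Rightarrow> ('b, 'k) nla) \<Rightarrow> bool" where
  "nla_iso S E S' E' f \<longleftrightarrow> bij_betw f (nla_carrier S E) (nla_carrier S' E') \<and>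
     (\<forall>p\<in>nla_carrier S E. \<forall>q\<in>nla_carrier S E. f (nla_add p q) = nla_add (f p) (f q)) \<and>
     (\<forall>c. \<forall>p\<in>nla_carrier S E. f (nla_smul c p) = nla_smul c (f p)) \<and>
     (\<forall>p\<in>nla_carrier S E. \<forall>q\<in>nla_carrier S E.
        f (nla_bracket E p q) = nla_bracket E' (f p) (f q))"

end

theory Submission
  imports Defs "HOL-Library.Function_Algebras" "HOL.Vector_Spaces"
begin

text \<open>An isomorphism f of the Lie algebras induces, modulo the derived algebras, a linear isomorphism
  T between the generating spaces V and V' such that [u, v] = 0 iff [T u, T v] = 0. Rank the vertices
  of S' compatibly with the domination preorder N(\<delta>) \<subseteq> N[\<gamma>] and send each vertex \<alpha> of S to
  the highest-ranked vertex in the support of T \<alpha>. If two vertices \<alpha>, \<beta> share this leading vertex,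
  then N(\<beta>) - {\<alpha>} \<subseteq> N(\<alpha>), so \<alpha> \<mapsto> \<alpha> - c \<beta> is an automorphism and composing T with it
  strictly lowers the total rank. Otherwise the leading vertices define an injection S \<rightarrow> S' mapping
  non-edges to non-edges. With such injections in both directions, counting non-edges shows that
  they are graph isomorphisms.\<close>

section \<open>Vectors supported on a vertex set\<close>

definition fscale :: "'k::field \<Rightarrow> ('x \<Rightarrow> 'k) \<Rightarrow> 'x \<Rightarrow> 'k" where
  "fscale c u = (\<lambda>x. c * u x)"

lemma fscale_apply [simp]: "fscale c u x = c * u x"
  by (simp add: fscale_def)

interpretation fun_vs: vector_space "fscale :: 'k::field \<Rightarrow> ('x \<Rightarrow> 'k) \<Rightarrow> 'x \<Rightarrow> 'k"
  by unfold_locales (auto simp: fscale_def fun_eq_iff algebra_simps)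

abbreviation flinear :: "(('x \<Rightarrow> 'k::field) \<Rightarrow> 'y \<Rightarrow> 'k) \<Rightarrow> bool" where
  "flinear \<equiv> Vector_Spaces.linear fscale fscale"

lemma flinearI:
  "(\<And>x y. T (x + y) = T x + T y) \<Longrightarrow> (\<And>c x. T (fscale c x) = fscale c (T x)) \<Longrightarrow> flinear T"
  by (simp add: Vector_Spaces.linear_iff fun_vs.vector_space_axioms)

lemma flinear_module_hom: "flinear T \<Longrightarrow> module_hom fscale fscale T"
  by (simp add: module_hom_iff_linear)

lemmas flinear_scale = module_hom.scale[OF flinear_module_hom]
  and flinear_diff = module_hom.diff[OF flinear_module_hom]
  and flinear_zero = module_hom.zero[OF flinear_module_hom]
  and flinear_sum = module_hom.sum[OF flinear_module_hom]

definition basis_vec :: "'x \<Rightarrow> 'x \<Rightarrow> 'k::field" where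
  "basis_vec x = (\<lambda>y. if y = x then 1 else 0)"

lemma basis_vec_apply: "basis_vec x y = (if y = x then 1 else 0)"
  by (simp add: basis_vec_def)

lemma basis_vec_inj: "basis_vec x = (basis_vec y :: 'x \<Rightarrow> 'k::field) \<Longrightarrow> x = y"
  by (metis basis_vec_apply one_neq_zero)

lemma sum_fun_apply: "(\<Sum>i\<in>A. F i) z = (\<Sum>i\<in>A. F i z)"
  by (induction A rule: infinite_finite_induct) auto

lemma sum_scaled_basis_apply:
  assumes "finite A"
  shows "(\<Sum>y\<in>A. fscale (c y) (basis_vec y)) z = (if z \<in> A then c z else (0::'k::field))"
  using assms by (simp add: sum_fun_apply basis_vec_apply if_distrib sum.delta cong: if_cong)

definition supported_on :: "'x set \<Rightarrow> ('x \<Rightarrow> 'k::field) set" where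
  "supported_on S = {u. \<forall>x. x \<notin> S \<longrightarrow> u x = 0}"

lemma subspace_supported_on: "fun_vs.subspace (supported_on S)"
  by (auto simp: fun_vs.subspace_def supported_on_def)

lemmas supported_on_scale = fun_vs.subspace_scale[OF subspace_supported_on]
  and supported_on_diff = fun_vs.subspace_diff[OF subspace_supported_on]
  and supported_on_sum = fun_vs.subspace_sum[OF subspace_supported_on]

lemma basis_vec_supported_on: "x \<in> S \<Longrightarrow> basis_vec x \<in> supported_on S"
  by (simp add: supported_on_def basis_vec_apply)

lemma supported_on_basis_expansion:
  assumes "finite S" "u \<in> supported_on S"
  shows "u = (\<Sum>y\<in>S. fscale (u y) (basis_vec y))"
  using assms by (auto simp: fun_eq_iff sum_scaled_basis_apply supported_on_def)

lemma supported_on_in_span: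
  assumes "finite S" "u \<in> supported_on S"
  shows "u \<in> fun_vs.span (basis_vec ` S)"
  by (subst supported_on_basis_expansion[OF assms])
    (intro fun_vs.span_sum fun_vs.span_scale fun_vs.span_base; simp)

lemma span_superset_of_card_le:
  assumes ind: "fun_vs.independent Y" and fin: "finite X" and sub: "Y \<subseteq> fun_vs.span X"
    and card: "card X \<le> card Y"
  shows "X \<subseteq> fun_vs.span Y"
proof
  fix x assume x: "x \<in> X"
  show "x \<in> fun_vs.span Y"
  proof (rule ccontr)
    assume nx: "x \<notin> fun_vs.span Y"
    have finY: "finite Y" and "card Y \<le> card X"
      using fun_vs.independent_span_bound[OF fin ind sub] by auto
    moreover have "card (insert x Y) \<le> card X"
      using fun_vs.independent_span_bound[OF fin fun_vs.independent_insertI[OF nx ind]]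
        sub x fun_vs.span_base by blast
    moreover have "x \<notin> Y" using nx fun_vs.span_base by blast
    ultimately show False using card by simp
  qed
qed

definition wedge :: "'x set set \<Rightarrow> ('x \<Rightarrow> 'k::field) \<Rightarrow> ('x \<Rightarrow> 'k) \<Rightarrow> 'x \<times> 'x \<Rightarrow> 'k" where
  "wedge E u v = (\<lambda>(x, y). if {x, y} \<in> E then u x * v y - u y * v x else 0)"

lemma wedge_basis_vec_nonedge:
  assumes "{a, b} \<notin> E"
  shows "wedge E (basis_vec a) (basis_vec b) = (0 :: _ \<Rightarrow> 'k::field)"
  using assms by (auto simp: wedge_def basis_vec_apply insert_commute fun_eq_iff)

lemma subspace_wedge_annihilator: "fun_vs.subspace {u. wedge E v u = 0}"
  by (auto simp: fun_vs.subspace_def wedge_def fun_eq_iff algebra_simps split: if_splits)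

section \<open>Commutation-preserving linear isomorphisms\<close>

definition commuting_iso :: "'a set \<Rightarrow> 'a set set \<Rightarrow> 'b set \<Rightarrow> 'b set set
    \<Rightarrow> (('a \<Rightarrow> 'k::field) \<Rightarrow> 'b \<Rightarrow> 'k) \<Rightarrow> (('b \<Rightarrow> 'k) \<Rightarrow> 'a \<Rightarrow> 'k) \<Rightarrow> bool" where
  "commuting_iso S E S' E' T U \<longleftrightarrow> flinear T \<and> flinear U \<and>
     (\<forall>u. T u \<in> supported_on S') \<and> (\<forall>u. U u \<in> supported_on S) \<and>
     (\<forall>u\<in>supported_on S. U (T u) = u) \<and> (\<forall>u\<in>supported_on S'. T (U u) = u) \<and>
     (\<forall>u\<in>supported_on S. \<forall>v\<in>supported_on S. wedge E u v = 0 \<longleftrightarrow> wedge E' (T u) (T v) = 0)"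

lemma commuting_isoD:
  assumes "commuting_iso S E S' E' T U"
  shows "flinear T" "flinear U" "T u \<in> supported_on S'" "U u' \<in> supported_on S"
    "u \<in> supported_on S \<Longrightarrow> U (T u) = u" "u' \<in> supported_on S' \<Longrightarrow> T (U u') = u'"
    "u \<in> supported_on S \<Longrightarrow> v \<in> supported_on S \<Longrightarrow>
       wedge E u v = 0 \<longleftrightarrow> wedge E' (T u) (T v) = 0"
  using assms unfolding commuting_iso_def by auto

lemma commuting_iso_sym:
  fixes T :: "('a \<Rightarrow> 'k::field) \<Rightarrow> 'b \<Rightarrow> 'k"
  assumes "commuting_iso S E S' E' T U"
  shows "commuting_iso S' E' S E U T"
proof -
  have "\<forall>u\<in>supported_on S'. \<forall>v\<in>supported_on S'. wedge E' u v = 0 \<longleftrightarrow> wedge E (U u) (U v) = 0"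
  proof (intro ballI)
    fix u v :: "'b \<Rightarrow> 'k" assume "u \<in> supported_on S'" "v \<in> supported_on S'"
    with commuting_isoD[OF assms] show "wedge E' u v = 0 \<longleftrightarrow> wedge E (U u) (U v) = 0"
      by metis
  qed
  then show ?thesis using assms unfolding commuting_iso_def by auto
qed

lemma commuting_iso_nonedge_wedge:
  fixes T :: "('a \<Rightarrow> 'k::field) \<Rightarrow> 'b \<Rightarrow> 'k"
  assumes g: "commuting_iso S E S' E' T U" and "x \<in> S" "y \<in> S" "{x, y} \<notin> E"
  shows "wedge E' (T (basis_vec x)) (T (basis_vec y)) = 0"
  by (rule iffD1[OF commuting_isoD(7)[OF g basis_vec_supported_on[OF assms(2)]
        basis_vec_supported_on[OF assms(3)]] wedge_basis_vec_nonedge[OF assms(4)]])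

lemma commuting_iso_basis_nonzero:
  fixes T :: "('a \<Rightarrow> 'k::field) \<Rightarrow> 'b \<Rightarrow> 'k"
  assumes g: "commuting_iso S E S' E' T U" and x: "x \<in> S"
  shows "T (basis_vec x) \<noteq> 0"
proof
  assume "T (basis_vec x) = 0"
  then have "basis_vec x = (0 :: 'a \<Rightarrow> 'k)"
    using commuting_isoD(5)[OF g basis_vec_supported_on[OF x]]
      flinear_zero[OF commuting_isoD(2)[OF g]] by simp
  then have "basis_vec x x = (0 :: 'k)" by simp
  then show False by (simp add: basis_vec_apply)
qed

lemma commuting_iso_basis_image:
  fixes T :: "('a \<Rightarrow> 'k::field) \<Rightarrow> 'b \<Rightarrow> 'k"
  assumes g: "commuting_iso S E S' E' T U" and A: "finite A" "A \<subseteq> S"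
  shows "inj_on (\<lambda>x. T (basis_vec x)) A" and "fun_vs.independent ((\<lambda>x. T (basis_vec x)) ` A)"
proof -
  note lin = commuting_isoD(1)[OF g] and UT = commuting_isoD(5)[OF g]
  show inj: "inj_on (\<lambda>x. T (basis_vec x)) A"
  proof (rule inj_onI)
    fix x y assume "x \<in> A" "y \<in> A" "T (basis_vec x) = T (basis_vec y)"
    then have "U (T (basis_vec x)) = U (T (basis_vec y))" by simp
    moreover have "basis_vec x \<in> supported_on S" "basis_vec y \<in> supported_on S"
      using \<open>x \<in> A\<close> \<open>y \<in> A\<close> A(2) by (auto intro: basis_vec_supported_on)
    ultimately have "basis_vec x = (basis_vec y :: 'a \<Rightarrow> 'k)" using UT by metis
    then show "x = y" by (rule basis_vec_inj)
  qed
  show "fun_vs.independent ((\<lambda>x. T (basis_vec x)) ` A)"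
  proof (rule fun_vs.independent_if_scalars_zero)
    fix c v assume zero: "(\<Sum>w\<in>(\<lambda>x. T (basis_vec x)) ` A. fscale (c w) w) = 0"
      and "v \<in> (\<lambda>x. T (basis_vec x)) ` A"
    then obtain x where x: "x \<in> A" "v = T (basis_vec x)" by blast
    define m where "m = (\<Sum>y\<in>A. fscale (c (T (basis_vec y))) (basis_vec y))"
    have "T m = 0"
      using zero by (simp add: m_def sum.reindex[OF inj] flinear_sum[OF lin] flinear_scale[OF lin])
    moreover have "m \<in> supported_on S"
      unfolding m_def using A(2) by (intro supported_on_sum supported_on_scale basis_vec_supported_on) auto
    ultimately have "m = 0" using UT flinear_zero[OF commuting_isoD(2)[OF g]] by metis
    then have "m x = 0" by simp
    then show "c v = 0" using x A(1) by (simp add: m_def sum_scaled_basis_apply)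
  qed (simp add: A(1))
qed

lemma commuting_iso_card_le:
  fixes T :: "('a \<Rightarrow> 'k::field) \<Rightarrow> 'b \<Rightarrow> 'k"
  assumes g: "commuting_iso S E S' E' T U" and fin: "finite S" "finite S'"
  shows "card S \<le> card S'"
proof -
  let ?Y = "(\<lambda>x. T (basis_vec x)) ` S"
  have "?Y \<subseteq> fun_vs.span (basis_vec ` S')"
    using supported_on_in_span[OF fin(2) commuting_isoD(3)[OF g]] by blast
  then have "card ?Y \<le> card (basis_vec ` S' :: ('b \<Rightarrow> 'k) set)"
    using fun_vs.independent_span_bound[OF finite_imageI[OF fin(2)]
        commuting_iso_basis_image(2)[OF g fin(1) subset_refl]] by simp
  also have "\<dots> \<le> card S'" by (rule card_image_le[OF fin(2)])
  finally show ?thesis using card_image[OF commuting_iso_basis_image(1)[OF g fin(1) subset_refl]] by simp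
qed

lemma commuting_iso_card_eq:
  assumes "commuting_iso S E S' E' T U" "finite S" "finite S'"
  shows "card S = card S'"
  using commuting_iso_card_le[OF assms]
    commuting_iso_card_le[OF commuting_iso_sym[OF assms(1)] assms(3,2)] by linarith

section \<open>Neighbourhoods and domination\<close>

definition nbrs :: "'x set set \<Rightarrow> 'x \<Rightarrow> 'x set" where
  "nbrs E x = {y. {x, y} \<in> E}"

definition deg :: "'x set set \<Rightarrow> 'x \<Rightarrow> nat" where
  "deg E x = card (nbrs E x)"

lemma simple_graph_finite: "simple_graph S E \<Longrightarrow> finite S"
  by (simp add: simple_graph_def)

lemma simple_graph_edgeD:
  assumes "simple_graph S E" "{x, y} \<in> E"
  shows "x \<in> S" "y \<in> S" "x \<noteq> y"
proof -
  obtain a b where "a \<in> S" "b \<in> S" "a \<noteq> b" "{x, y} = {a, b}"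
    using assms unfolding simple_graph_def by blast
  then show "x \<in> S" "y \<in> S" "x \<noteq> y" by (auto simp: doubleton_eq_iff)
qed

lemma simple_graph_no_loop: "simple_graph S E \<Longrightarrow> {x} \<notin> E"
  using simple_graph_edgeD(3)[of S E x x] by auto

lemma simple_graph_finite_edges:
  assumes "simple_graph S E" shows "finite E"
proof -
  have "E \<subseteq> Pow S"
  proof
    fix e assume "e \<in> E"
    then obtain x y where "x \<in> S" "y \<in> S" "e = {x, y}" using assms unfolding simple_graph_def by blast
    then show "e \<in> Pow S" by simp
  qed
  then show ?thesis using simple_graph_finite[OF assms] finite_subset by blast
qed

lemma nbrs_subset:
  assumes "simple_graph S E" shows "nbrs E x \<subseteq> S - {x}"
proof
  fix y assume "y \<in> nbrs E x"
  then have "{x, y} \<in> E" by (simp add: nbrs_def)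
  then show "y \<in> S - {x}" using simple_graph_edgeD[OF assms] by blast
qed

lemma card_nonnbrs_add_deg:
  assumes "simple_graph S E"
  shows "card {y\<in>S. {x, y} \<notin> E} + deg E x = card S"
proof -
  have fin: "finite S" using simple_graph_finite[OF assms] .
  have S: "S = {y\<in>S. {x, y} \<notin> E} \<union> nbrs E x" using nbrs_subset[OF assms] by (auto simp: nbrs_def)
  have "finite (nbrs E x)" using nbrs_subset[OF assms] fin finite_subset by blast
  then have "card ({y\<in>S. {x, y} \<notin> E} \<union> nbrs E x) = card {y\<in>S. {x, y} \<notin> E} + card (nbrs E x)"
    using fin by (intro card_Un_disjoint) (auto simp: nbrs_def)
  then show ?thesis unfolding deg_def by (simp only: S[symmetric])
qed

definition dominated :: "'x set set \<Rightarrow> 'x \<Rightarrow> 'x \<Rightarrow> bool" where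
  "dominated E \<delta> \<gamma> \<longleftrightarrow> nbrs E \<delta> \<subseteq> insert \<gamma> (nbrs E \<gamma>)"

lemma dominated_refl: "dominated E \<gamma> \<gamma>"
  by (simp add: dominated_def subset_insertI)

lemma dominated_trans:
  assumes ab: "dominated E a b" and bc: "dominated E b c"
  shows "dominated E a c"
  unfolding dominated_def
proof
  fix y assume ay: "y \<in> nbrs E a"
  show "y \<in> insert c (nbrs E c)"
  proof (cases "y = b")
    case False
    then have "y \<in> nbrs E b" using ab ay unfolding dominated_def by blast
    then show ?thesis using bc unfolding dominated_def by blast
  next
    case True
    then have "a \<in> nbrs E b" using ay by (simp add: nbrs_def insert_commute)
    then have "a = c \<or> a \<in> nbrs E c" using bc unfolding dominated_def by blast
    then show ?thesis
    proof
      assume "a = c" then show ?thesis using ay by simp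
    next
      assume "a \<in> nbrs E c"
      then have "c \<in> nbrs E a" by (simp add: nbrs_def insert_commute)
      then have "c = b \<or> c \<in> nbrs E b" using ab unfolding dominated_def by blast
      then show ?thesis using True by (auto simp: nbrs_def insert_commute)
    qed
  qed
qed

text \<open>The rank of \<gamma> counts the vertices dominated by \<gamma>; a numbering of S breaks ties.\<close>
lemma domination_ranking_exists:
  assumes fin: "finite S"
  obtains rank :: "'x \<Rightarrow> nat" where "inj_on rank S"
    and "\<And>\<delta> \<gamma>. \<delta> \<in> S \<Longrightarrow> \<gamma> \<in> S \<Longrightarrow> dominated E \<delta> \<gamma> \<Longrightarrow> \<not> dominated E \<gamma> \<delta> \<Longrightarrow> rank \<delta> < rank \<gamma>"
proof -
  obtain num where num: "bij_betw num S {0..<card S}" using ex_bij_betw_finite_nat[OF fin] by blast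
  define h where "h \<gamma> = card {\<delta>\<in>S. dominated E \<delta> \<gamma>}" for \<gamma>
  define rank where "rank \<gamma> = h \<gamma> * card S + num \<gamma>" for \<gamma>
  have num_less: "num \<gamma> < card S" if "\<gamma> \<in> S" for \<gamma>
    using num that unfolding bij_betw_def by auto
  have rank_less: "rank \<delta> < rank \<gamma>" if "h \<delta> < h \<gamma>" "\<delta> \<in> S" for \<delta> \<gamma>
  proof -
    have "rank \<delta> < Suc (h \<delta>) * card S" unfolding rank_def using num_less[OF that(2)] by simp
    also have "\<dots> \<le> h \<gamma> * card S" using that(1) by (intro mult_right_mono) auto
    also have "\<dots> \<le> rank \<gamma>" unfolding rank_def by simp
    finally show ?thesis .
  qed
  show ?thesis
  proof
    show "inj_on rank S"
    proof (rule inj_onI)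
      fix x y assume x: "x \<in> S" and y: "y \<in> S" and eq: "rank x = rank y"
      have "h x = h y"
      proof (rule ccontr)
        assume "h x \<noteq> h y"
        then show False using rank_less x y eq by (metis nat_neq_iff)
      qed
      then have "num x = num y" using eq unfolding rank_def by simp
      then show "x = y" using num x y unfolding bij_betw_def inj_on_def by blast
    qed
  next
    fix \<delta> \<gamma> assume "\<delta> \<in> S" "\<gamma> \<in> S" "dominated E \<delta> \<gamma>" "\<not> dominated E \<gamma> \<delta>"
    then have "{\<epsilon>\<in>S. dominated E \<epsilon> \<delta>} \<subset> {\<epsilon>\<in>S. dominated E \<epsilon> \<gamma>}"
      by (auto intro: dominated_trans dominated_refl)
    then have "h \<delta> < h \<gamma>" unfolding h_def by (rule psubset_card_mono[rotated]) (simp add: fin)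
    then show "rank \<delta> < rank \<gamma>" using rank_less \<open>\<delta> \<in> S\<close> by blast
  qed
qed

section \<open>Supports of images of generators\<close>

text \<open>If v \<gamma> \<noteq> 0, a vector commuting with v is determined by its coordinates at \<gamma> and at the
  non-neighbours of \<gamma>, since the \<gamma>\<rho>-coefficient of the bracket fixes its coordinate at a neighbour \<rho>.\<close>
lemma annihilator_subset_span:
  fixes v :: "'x \<Rightarrow> 'k::field"
  assumes sg: "simple_graph S E" and \<gamma>: "\<gamma> \<in> S" and v\<gamma>: "v \<gamma> \<noteq> 0"
  defines "R \<equiv> {y\<in>S. y \<noteq> \<gamma> \<and> {\<gamma>, y} \<notin> E}"
  defines "w \<equiv> basis_vec \<gamma> + (\<Sum>\<rho>\<in>nbrs E \<gamma>. fscale (v \<rho> / v \<gamma>) (basis_vec \<rho>))"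
  shows "{u \<in> supported_on S. wedge E v u = 0} \<subseteq> fun_vs.span (insert w (basis_vec ` R))"
    and "card (insert w (basis_vec ` R)) + deg E \<gamma> \<le> card S"
proof -
  have finS: "finite S" using simple_graph_finite[OF sg] .
  have N: "nbrs E \<gamma> \<subseteq> S - {\<gamma>}" using nbrs_subset[OF sg] .
  have finN: "finite (nbrs E \<gamma>)" using N finS finite_subset by blast
  have finR: "finite R" unfolding R_def using finS by simp
  show "{u \<in> supported_on S. wedge E v u = 0} \<subseteq> fun_vs.span (insert w (basis_vec ` R))"
  proof
    fix u assume "u \<in> {u \<in> supported_on S. wedge E v u = 0}"
    then have u: "u \<in> supported_on S" and uv: "wedge E v u = 0" by auto
    have nbr: "u \<rho> = v \<rho> / v \<gamma> * u \<gamma>" if "\<rho> \<in> nbrs E \<gamma>" for \<rho>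
    proof -
      have "wedge E v u (\<gamma>, \<rho>) = 0" using uv by simp
      then have "v \<gamma> * u \<rho> - v \<rho> * u \<gamma> = 0" using that by (simp add: wedge_def nbrs_def)
      then show ?thesis using v\<gamma> by (simp add: field_simps)
    qed
    have "u = fscale (u \<gamma>) w + (\<Sum>y\<in>R. fscale (u y) (basis_vec y))"
    proof
      fix z
      have "z = \<gamma> \<or> z \<in> nbrs E \<gamma> \<or> z \<in> R \<or> z \<notin> S"
        using N unfolding R_def nbrs_def by blast
      moreover have "\<gamma> \<notin> R" "R \<inter> nbrs E \<gamma> = {}" "\<gamma> \<notin> nbrs E \<gamma>"
        using N simple_graph_no_loop[OF sg] unfolding R_def nbrs_def by auto
      ultimately show "u z = (fscale (u \<gamma>) w + (\<Sum>y\<in>R. fscale (u y) (basis_vec y))) z"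
        using nbr[of z] u finN finR R_def
        by (auto simp: w_def sum_scaled_basis_apply basis_vec_apply supported_on_def)
    qed
    also have "\<dots> \<in> fun_vs.span (insert w (basis_vec ` R))"
      by (intro fun_vs.span_add fun_vs.span_scale fun_vs.span_sum fun_vs.span_base) auto
    finally show "u \<in> fun_vs.span (insert w (basis_vec ` R))" .
  qed
  have "card (insert w (basis_vec ` R)) \<le> Suc (card (basis_vec ` R :: ('x \<Rightarrow> 'k) set))"
    using finR by (simp add: card_insert_if)
  then have "card (insert w (basis_vec ` R)) \<le> Suc (card R)"
    using card_image_le[OF finR, of "basis_vec :: 'x \<Rightarrow> 'x \<Rightarrow> 'k"] by linarith
  moreover have "{y\<in>S. {\<gamma>, y} \<notin> E} = insert \<gamma> R"
    using \<gamma> simple_graph_no_loop[OF sg] unfolding R_def by auto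
  then have "Suc (card R) + deg E \<gamma> = card S"
    using card_nonnbrs_add_deg[OF sg, of \<gamma>] finR unfolding R_def by simp
  ultimately show "card (insert w (basis_vec ` R)) + deg E \<gamma> \<le> card S" by linarith
qed

lemma commuting_iso_support_pairing:
  fixes T :: "('a \<Rightarrow> 'k::field) \<Rightarrow> 'b \<Rightarrow> 'k"
  assumes g: "commuting_iso S E S' E' T U" and finS': "finite S'" and \<alpha>: "\<alpha> \<in> S"
  obtains \<gamma> where "\<gamma> \<in> S'" "T (basis_vec \<alpha>) \<gamma> \<noteq> 0" "U (basis_vec \<gamma>) \<alpha> \<noteq> 0"
proof -
  note linU = commuting_isoD(2)[OF g]
  define v where "v = T (basis_vec \<alpha>)"
  have "basis_vec \<alpha> = U v"
    unfolding v_def using commuting_isoD(5)[OF g basis_vec_supported_on[OF \<alpha>]] by simp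
  also have "\<dots> = U (\<Sum>\<gamma>\<in>S'. fscale (v \<gamma>) (basis_vec \<gamma>))"
    using supported_on_basis_expansion[OF finS' commuting_isoD(3)[OF g]] unfolding v_def
    by (rule arg_cong)
  also have "\<dots> = (\<Sum>\<gamma>\<in>S'. fscale (v \<gamma>) (U (basis_vec \<gamma>)))"
    by (simp add: flinear_sum[OF linU] flinear_scale[OF linU])
  finally have "basis_vec \<alpha> \<alpha> = (\<Sum>\<gamma>\<in>S'. fscale (v \<gamma>) (U (basis_vec \<gamma>))) \<alpha>"
    by (rule fun_cong)
  then have "(\<Sum>\<gamma>\<in>S'. v \<gamma> * U (basis_vec \<gamma>) \<alpha>) \<noteq> 0"
    by (simp add: sum_fun_apply basis_vec_apply)
  then obtain \<gamma> where "\<gamma> \<in> S'" and "v \<gamma> * U (basis_vec \<gamma>) \<alpha> \<noteq> 0"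
    by (meson sum.neutral)
  with that show thesis unfolding v_def by simp
qed

text \<open>Dually, U maps the non-neighbours of \<gamma> to independent vectors commuting with U \<gamma>, whose
  \<alpha>-coordinate is nonzero; the bound on that annihilator compares the degrees.\<close>
lemma support_vertex_of_larger_degree:
  fixes T :: "('a \<Rightarrow> 'k::field) \<Rightarrow> 'b \<Rightarrow> 'k"
  assumes g: "commuting_iso S E S' E' T U" and sg: "simple_graph S E" and sg': "simple_graph S' E'"
    and \<alpha>: "\<alpha> \<in> S"
  shows "\<exists>\<gamma>\<in>S'. T (basis_vec \<alpha>) \<gamma> \<noteq> 0 \<and> deg E \<alpha> \<le> deg E' \<gamma>"
proof -
  have finS: "finite S" and finS': "finite S'" using sg sg' simple_graph_finite by auto
  obtain \<gamma> where \<gamma>: "\<gamma> \<in> S'" and v\<gamma>: "T (basis_vec \<alpha>) \<gamma> \<noteq> 0" and q\<alpha>: "U (basis_vec \<gamma>) \<alpha> \<noteq> 0"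
    using commuting_iso_support_pairing[OF g finS' \<alpha>] .
  define q where "q = U (basis_vec \<gamma>)"
  note q\<alpha> = q\<alpha>[folded q_def]
  define A where "A = {y\<in>S'. {\<gamma>, y} \<notin> E'}"
  have finA: "finite A" and AS': "A \<subseteq> S'" using finS' unfolding A_def by auto
  note gs = commuting_iso_sym[OF g]
  have "(\<lambda>y. U (basis_vec y)) ` A \<subseteq> {u \<in> supported_on S. wedge E q u = 0}"
  proof (rule image_subsetI)
    fix y assume "y \<in> A"
    then have "wedge E q (U (basis_vec y)) = 0"
      unfolding A_def q_def by (intro commuting_iso_nonedge_wedge[OF gs \<gamma>]) auto
    then show "U (basis_vec y) \<in> {u \<in> supported_on S. wedge E q u = 0}"
      using commuting_isoD(4)[OF g] by simp
  qed
  also have "\<dots> \<subseteq> fun_vs.span (insert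
      (basis_vec \<alpha> + (\<Sum>\<rho>\<in>nbrs E \<alpha>. fscale (q \<rho> / q \<alpha>) (basis_vec \<rho>)))
      (basis_vec ` {y\<in>S. y \<noteq> \<alpha> \<and> {\<alpha>, y} \<notin> E}))" (is "_ \<subseteq> fun_vs.span ?X")
    by (rule annihilator_subset_span(1)[of S E \<alpha> q, OF sg \<alpha> q\<alpha>])
  finally have "card ((\<lambda>y. U (basis_vec y)) ` A) \<le> card ?X"
    using fun_vs.independent_span_bound[OF _ commuting_iso_basis_image(2)[OF gs finA AS']] finS
    by simp
  then have "card A + deg E \<alpha> \<le> card S"
    using annihilator_subset_span(2)[of S E \<alpha> q, OF sg \<alpha> q\<alpha>] card_image[OF commuting_iso_basis_image(1)[OF gs finA AS']]
    by simp
  moreover have "card A + deg E' \<gamma> = card S'" unfolding A_def by (rule card_nonnbrs_add_deg[OF sg'])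
  moreover have "card S = card S'" by (rule commuting_iso_card_eq[OF g finS finS'])
  ultimately show ?thesis using \<gamma> v\<gamma> by auto
qed

lemma dominated_if_commutes_with_nonnbrs:
  fixes v :: "'x \<Rightarrow> 'k::field"
  assumes sg: "simple_graph S E"
    and comm: "\<And>y. y \<in> S \<Longrightarrow> y \<noteq> \<gamma> \<Longrightarrow> {\<gamma>, y} \<notin> E \<Longrightarrow> wedge E v (basis_vec y) = 0"
    and v\<delta>: "v \<delta> \<noteq> 0"
  shows "dominated E \<delta> \<gamma>"
  unfolding dominated_def
proof
  fix y assume "y \<in> nbrs E \<delta>"
  then have \<delta>y: "{\<delta>, y} \<in> E" by (simp add: nbrs_def)
  show "y \<in> insert \<gamma> (nbrs E \<gamma>)"
  proof (rule ccontr)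
    assume "y \<notin> insert \<gamma> (nbrs E \<gamma>)"
    then have "wedge E v (basis_vec y) (\<delta>, y) = 0"
      using comm simple_graph_edgeD(2)[OF sg \<delta>y] by (simp add: nbrs_def)
    then show False
      using \<delta>y v\<delta> simple_graph_edgeD(3)[OF sg \<delta>y] by (simp add: wedge_def basis_vec_apply)
  qed
qed

lemma wedge_eq_0_if_dominated_support:
  fixes w z :: "'x \<Rightarrow> 'k::field"
  assumes dom: "\<And>\<delta>. w \<delta> \<noteq> 0 \<Longrightarrow> dominated E \<delta> \<gamma>"
    and z: "\<And>y. y = \<gamma> \<or> y \<in> nbrs E \<gamma> \<Longrightarrow> z y = 0"
  shows "wedge E w z = 0"
proof
  fix p
  show "wedge E w z p = 0 p"
  proof (cases p)
    case (Pair p1 p2)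
    have prod: "w a * z b = 0" if "{a, b} \<in> E" for a b
      using dom[of a] z[of b] that unfolding dominated_def nbrs_def by auto
    have "{p1, p2} \<in> E \<Longrightarrow> w p1 * z p2 - w p2 * z p1 = 0"
      using prod[of p1 p2] prod[of p2 p1] by (auto simp: insert_commute)
    then show ?thesis using Pair by (simp add: wedge_def)
  qed
qed

text \<open>The images of the non-neighbours of \<alpha> are independent and commute with T \<alpha>; by the degree
  bound they are at least as many as the spanning set of that annihilator, so they span it. Hence
  every non-neighbour of \<gamma> commutes with T \<alpha>, which forces domination.\<close>
lemma dominating_support_vertex:
  fixes T :: "('a \<Rightarrow> 'k::field) \<Rightarrow> 'b \<Rightarrow> 'k"
  assumes g: "commuting_iso S E S' E' T U" and sg: "simple_graph S E" and sg': "simple_graph S' E'"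
    and \<alpha>: "\<alpha> \<in> S"
  shows "\<exists>\<gamma>\<in>S'. T (basis_vec \<alpha>) \<gamma> \<noteq> 0 \<and>
    (\<forall>\<delta>. T (basis_vec \<alpha>) \<delta> \<noteq> 0 \<longrightarrow> dominated E' \<delta> \<gamma>)"
proof -
  have finS: "finite S" and finS': "finite S'" using sg sg' simple_graph_finite by auto
  obtain \<gamma> where \<gamma>: "\<gamma> \<in> S'" and v\<gamma>: "T (basis_vec \<alpha>) \<gamma> \<noteq> 0" and deg: "deg E \<alpha> \<le> deg E' \<gamma>"
    using support_vertex_of_larger_degree[OF g sg sg' \<alpha>] by blast
  define v where "v = T (basis_vec \<alpha>)"
  define A where "A = {x\<in>S. {\<alpha>, x} \<notin> E}"
  define R where "R = {y\<in>S'. y \<noteq> \<gamma> \<and> {\<gamma>, y} \<notin> E'}"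
  define w where "w = basis_vec \<gamma> + (\<Sum>\<rho>\<in>nbrs E' \<gamma>. fscale (v \<rho> / v \<gamma>) (basis_vec \<rho>))"
  let ?Y = "(\<lambda>x. T (basis_vec x)) ` A"
  have finA: "finite A" and AS: "A \<subseteq> S" using finS unfolding A_def by auto
  note ind = commuting_iso_basis_image(2)[OF g finA AS]
  have v\<gamma>': "v \<gamma> \<noteq> 0" using v\<gamma> unfolding v_def .
  have Y_ann: "?Y \<subseteq> {u. wedge E' v u = 0}"
    unfolding v_def A_def using commuting_iso_nonedge_wedge[OF g \<alpha>] by blast
  have "?Y \<subseteq> {u \<in> supported_on S'. wedge E' v u = 0}"
    using Y_ann commuting_isoD(3)[OF g] by blast
  also have "\<dots> \<subseteq> fun_vs.span (insert w (basis_vec ` R))"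
    unfolding w_def R_def by (rule annihilator_subset_span(1)[of S' E' \<gamma> v, OF sg' \<gamma> v\<gamma>'])
  finally have Y_span: "?Y \<subseteq> fun_vs.span (insert w (basis_vec ` R))" .
  have "card A + deg E \<alpha> = card S" unfolding A_def by (rule card_nonnbrs_add_deg[OF sg])
  then have "card (insert w (basis_vec ` R)) \<le> card ?Y"
    using annihilator_subset_span(2)[of S' E' \<gamma> v, OF sg' \<gamma> v\<gamma>', folded w_def R_def]
      commuting_iso_card_eq[OF g finS finS'] deg card_image[OF commuting_iso_basis_image(1)[OF g finA AS]]
    by simp
  then have "insert w (basis_vec ` R) \<subseteq> fun_vs.span ?Y"
    using span_superset_of_card_le[OF ind _ Y_span] finS' unfolding R_def by simp
  also have "\<dots> \<subseteq> {u. wedge E' v u = 0}"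
    by (rule fun_vs.span_minimal[OF Y_ann subspace_wedge_annihilator])
  finally have R_comm: "wedge E' v (basis_vec y) = 0" if "y \<in> R" for y
    using that by blast
  have "dominated E' \<delta> \<gamma>" if "v \<delta> \<noteq> 0" for \<delta>
    by (rule dominated_if_commutes_with_nonnbrs[OF sg' R_comm that]) (simp add: R_def)
  then show ?thesis using \<gamma> v\<gamma> unfolding v_def by blast
qed

text \<open>For a neighbour x of \<beta> not adjacent to \<alpha>, the vector x - c \<alpha>, with c chosen to kill the
  \<gamma>-coordinate of its image, is mapped into the annihilator of T \<beta> although it does not commute
  with \<beta>.\<close>
lemma nbrs_subset_of_shared_dominator:
  fixes T :: "('a \<Rightarrow> 'k::field) \<Rightarrow> 'b \<Rightarrow> 'k"
  assumes g: "commuting_iso S E S' E' T U" and sg: "simple_graph S E"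
    and \<alpha>: "\<alpha> \<in> S" and \<beta>: "\<beta> \<in> S"
    and v\<gamma>: "T (basis_vec \<alpha>) \<gamma> \<noteq> 0"
    and dom: "\<And>\<delta>. T (basis_vec \<beta>) \<delta> \<noteq> 0 \<Longrightarrow> dominated E' \<delta> \<gamma>"
  shows "nbrs E \<beta> - {\<alpha>} \<subseteq> nbrs E \<alpha>"
proof
  fix x assume "x \<in> nbrs E \<beta> - {\<alpha>}"
  then have \<beta>x: "{\<beta>, x} \<in> E" and x\<alpha>: "x \<noteq> \<alpha>" by (auto simp: nbrs_def)
  have x: "x \<in> S" and x\<beta>: "\<beta> \<noteq> x" using simple_graph_edgeD[OF sg \<beta>x] by auto
  show "x \<in> nbrs E \<alpha>"
  proof (rule ccontr)
    assume "x \<notin> nbrs E \<alpha>"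
    then have vt: "wedge E' (T (basis_vec \<alpha>)) (T (basis_vec x)) = 0"
      using commuting_iso_nonedge_wedge[OF g \<alpha> x] by (simp add: nbrs_def)
    define c where "c = T (basis_vec x) \<gamma> / T (basis_vec \<alpha>) \<gamma>"
    define z where "z = basis_vec x - fscale c (basis_vec \<alpha>)"
    have Tz: "T z = T (basis_vec x) - fscale c (T (basis_vec \<alpha>))"
      unfolding z_def using commuting_isoD(1)[OF g] by (simp only: flinear_diff flinear_scale)
    have Tz_vanish: "T z y = 0" if "y = \<gamma> \<or> y \<in> nbrs E' \<gamma>" for y
    proof -
      have "wedge E' (T (basis_vec \<alpha>)) (T (basis_vec x)) (\<gamma>, y) = 0" using vt by simp
      then show ?thesis using that v\<gamma> unfolding Tz c_def
        by (auto simp: wedge_def nbrs_def field_simps)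
    qed
    have "wedge E' (T (basis_vec \<beta>)) (T z) = 0"
      using wedge_eq_0_if_dominated_support[OF dom Tz_vanish] .
    moreover have "z \<in> supported_on S"
      unfolding z_def using x \<alpha> by (intro supported_on_diff supported_on_scale basis_vec_supported_on)
    ultimately have "wedge E (basis_vec \<beta>) z = 0"
      using commuting_isoD(7)[OF g basis_vec_supported_on[OF \<beta>]] by blast
    then have "wedge E (basis_vec \<beta>) z (\<beta>, x) = 0" by simp
    then show False using \<beta>x x\<alpha> x\<beta> by (simp add: wedge_def z_def basis_vec_apply)
  qed
qed

section \<open>Transvections\<close>

text \<open>The linear map sending the generator \<alpha> to \<alpha> - c \<beta> and fixing all other generators.\<close>
definition transvection :: "'k::field \<Rightarrow> 'x \<Rightarrow> 'x \<Rightarrow> ('x \<Rightarrow> 'k) \<Rightarrow> 'x \<Rightarrow> 'k" where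
  "transvection c \<alpha> \<beta> u = (\<lambda>x. if x = \<beta> then u \<beta> - c * u \<alpha> else u x)"

lemma flinear_transvection: "flinear (transvection c \<alpha> \<beta>)"
  by (rule flinearI) (auto simp: transvection_def fun_eq_iff algebra_simps)

lemma transvection_inverse:
  "\<alpha> \<noteq> \<beta> \<Longrightarrow> transvection (- c) \<alpha> \<beta> (transvection c \<alpha> \<beta> u) = u"
  by (auto simp: transvection_def fun_eq_iff)

lemma transvection_supported_on:
  "\<beta> \<in> S \<Longrightarrow> u \<in> supported_on S \<Longrightarrow> transvection c \<alpha> \<beta> u \<in> supported_on S"
  by (auto simp: transvection_def supported_on_def)

lemma wedge_transvection:
  fixes u u' :: "'x \<Rightarrow> 'k::field"
  assumes nbrs: "nbrs E \<beta> - {\<alpha>} \<subseteq> nbrs E \<alpha>" and uu': "wedge E u u' = 0"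
  shows "wedge E (transvection c \<alpha> \<beta> u) (transvection c \<alpha> \<beta> u') = 0"
proof -
  let ?t = "transvection c \<alpha> \<beta>"
  have edge: "u p * u' q = u q * u' p" if "{p, q} \<in> E" for p q
    using fun_cong[OF uu', of "(p, q)"] that by (simp add: wedge_def)
  have edge_\<alpha>: "u \<alpha> * u' q = u q * u' \<alpha>" if "{\<beta>, q} \<in> E" for q
  proof (cases "q = \<alpha>")
    case False
    then show ?thesis using nbrs that edge[of \<alpha> q] by (auto simp: nbrs_def)
  qed simp
  have step: "(a - c * x) * b' = b * (a' - c * x')" if "a * b' = b * a'" "x * b' = b * x'"
    for a a' b b' x x' :: 'k
    using that by algebra
  have "?t u p * ?t u' q = ?t u q * ?t u' p" if pq: "{p, q} \<in> E" for p q
  proof -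
    have qp: "{q, p} \<in> E" using pq by (simp add: insert_commute)
    show ?thesis
    proof (cases "p = \<beta>"; cases "q = \<beta>")
      assume "p = \<beta>" "q \<noteq> \<beta>"
      then show ?thesis using step[OF edge[OF pq] edge_\<alpha>[of q]] pq
        by (simp add: transvection_def)
    next
      assume "p \<noteq> \<beta>" "q = \<beta>"
      then show ?thesis using step[OF edge[OF qp] edge_\<alpha>[of p]] qp
        by (simp add: transvection_def)
    qed (use edge[OF pq] in \<open>auto simp: transvection_def\<close>)
  qed
  then show ?thesis by (auto simp: wedge_def fun_eq_iff)
qed

lemma commuting_iso_compose_transvection:
  fixes T :: "('a \<Rightarrow> 'k::field) \<Rightarrow> 'b \<Rightarrow> 'k"
  assumes g: "commuting_iso S E S' E' T U" and \<alpha>\<beta>: "\<alpha> \<noteq> \<beta>" and \<beta>: "\<beta> \<in> S"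
    and nbrs: "nbrs E \<beta> - {\<alpha>} \<subseteq> nbrs E \<alpha>"
  shows "commuting_iso S E S' E' (T \<circ> transvection c \<alpha> \<beta>) (transvection (- c) \<alpha> \<beta> \<circ> U)"
  unfolding commuting_iso_def
proof (intro conjI ballI allI)
  note tr_inv = transvection_inverse[OF \<alpha>\<beta>]
    and tr_inv' = transvection_inverse[OF \<alpha>\<beta>, of "- c", simplified]
    and tr_supp = transvection_supported_on[OF \<beta>]
  show "flinear (T \<circ> transvection c \<alpha> \<beta>)"
    by (rule Vector_Spaces.linear_compose[OF flinear_transvection commuting_isoD(1)[OF g]])
  show "flinear (transvection (- c) \<alpha> \<beta> \<circ> U)"
    by (rule Vector_Spaces.linear_compose[OF commuting_isoD(2)[OF g] flinear_transvection])
  show "(T \<circ> transvection c \<alpha> \<beta>) u \<in> supported_on S'" for u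
    using commuting_isoD(3)[OF g] by simp
  show "(transvection (- c) \<alpha> \<beta> \<circ> U) u \<in> supported_on S" for u
    using tr_supp[OF commuting_isoD(4)[OF g]] by simp
  show "(transvection (- c) \<alpha> \<beta> \<circ> U) ((T \<circ> transvection c \<alpha> \<beta>) u) = u" if "u \<in> supported_on S" for u
    using commuting_isoD(5)[OF g tr_supp[OF that]] tr_inv by simp
  show "(T \<circ> transvection c \<alpha> \<beta>) ((transvection (- c) \<alpha> \<beta> \<circ> U) u) = u" if "u \<in> supported_on S'" for u
    using commuting_isoD(6)[OF g that] tr_inv' by simp
  show "wedge E u v = 0 \<longleftrightarrow> wedge E' ((T \<circ> transvection c \<alpha> \<beta>) u) ((T \<circ> transvection c \<alpha> \<beta>) v) = 0"
    if "u \<in> supported_on S" "v \<in> supported_on S" for u v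
  proof -
    have "wedge E (transvection c \<alpha> \<beta> u) (transvection c \<alpha> \<beta> v) = 0 \<longleftrightarrow> wedge E u v = 0"
      using wedge_transvection[OF nbrs, of _ _ c] wedge_transvection[OF nbrs, of _ _ "- c"] tr_inv by metis
    then show ?thesis using commuting_isoD(7)[OF g tr_supp[OF that(1)] tr_supp[OF that(2)]] by simp
  qed
qed

section \<open>Leading vertices and the descent\<close>

definition leading_vertex :: "('x \<Rightarrow> nat) \<Rightarrow> 'x set \<Rightarrow> ('x \<Rightarrow> 'k::zero) \<Rightarrow> 'x" where
  "leading_vertex rank S v = arg_max rank (\<lambda>\<gamma>. \<gamma> \<in> S \<and> v \<gamma> \<noteq> 0)"

lemma leading_vertex:
  fixes v :: "'x \<Rightarrow> 'k::field"
  assumes fin: "finite S" and v: "v \<in> supported_on S" "v \<noteq> 0"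
  shows "leading_vertex rank S v \<in> S" and "v (leading_vertex rank S v) \<noteq> 0"
    and "v \<delta> \<noteq> 0 \<Longrightarrow> rank \<delta> \<le> rank (leading_vertex rank S v)"
proof -
  obtain \<gamma> where "v \<gamma> \<noteq> 0" using v(2) by (auto simp: fun_eq_iff)
  then have \<gamma>: "\<gamma> \<in> S \<and> v \<gamma> \<noteq> 0" using v(1) by (auto simp: supported_on_def)
  have "\<forall>y. y \<in> S \<and> v y \<noteq> 0 \<longrightarrow> rank y < Suc (Max (rank ` S))"
    using fin by (auto simp: le_imp_less_Suc)
  note max = arg_max_nat_lemma[of "\<lambda>\<gamma>. \<gamma> \<in> S \<and> v \<gamma> \<noteq> 0", OF \<gamma> this, folded leading_vertex_def]
  then show "leading_vertex rank S v \<in> S" and "v (leading_vertex rank S v) \<noteq> 0" by auto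
  show "rank \<delta> \<le> rank (leading_vertex rank S v)" if "v \<delta> \<noteq> 0"
    using max that v(1) by (auto simp: supported_on_def)
qed

definition nonedge_embedding :: "('a \<Rightarrow> 'b) \<Rightarrow> 'a set \<Rightarrow> 'a set set \<Rightarrow> 'b set \<Rightarrow> 'b set set \<Rightarrow> bool" where
  "nonedge_embedding \<sigma> S E S' E' \<longleftrightarrow> inj_on \<sigma> S \<and> \<sigma> ` S \<subseteq> S' \<and>
     (\<forall>x\<in>S. \<forall>y\<in>S. x \<noteq> y \<longrightarrow> {x, y} \<notin> E \<longrightarrow> {\<sigma> x, \<sigma> y} \<notin> E')"

locale domination_ranking =
  fixes S' :: "'b set" and E' :: "'b set set" and rank :: "'b \<Rightarrow> nat"
  assumes graph: "simple_graph S' E'" and rank_inj: "inj_on rank S'"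
    and rank_strict_mono: "\<And>\<delta> \<gamma>. \<delta> \<in> S' \<Longrightarrow> \<gamma> \<in> S' \<Longrightarrow> dominated E' \<delta> \<gamma> \<Longrightarrow>
      \<not> dominated E' \<gamma> \<delta> \<Longrightarrow> rank \<delta> < rank \<gamma>"
begin

definition lead :: "(('a \<Rightarrow> 'k::field) \<Rightarrow> 'b \<Rightarrow> 'k) \<Rightarrow> 'a \<Rightarrow> 'b" where
  "lead T x = leading_vertex rank S' (T (basis_vec x))"

definition potential :: "'a set \<Rightarrow> (('a \<Rightarrow> 'k::field) \<Rightarrow> 'b \<Rightarrow> 'k) \<Rightarrow> nat" where
  "potential S T = (\<Sum>x\<in>S. rank (lead T x))"

lemma lead:
  fixes T :: "('a \<Rightarrow> 'k::field) \<Rightarrow> 'b \<Rightarrow> 'k"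
  assumes g: "commuting_iso S E S' E' T U" and x: "x \<in> S"
  shows "lead T x \<in> S'" and "T (basis_vec x) (lead T x) \<noteq> 0"
    and "T (basis_vec x) \<delta> \<noteq> 0 \<Longrightarrow> rank \<delta> \<le> rank (lead T x)"
  using leading_vertex[OF simple_graph_finite[OF graph] commuting_isoD(3)[OF g]
      commuting_iso_basis_nonzero[OF g x]]
  unfolding lead_def by auto

lemma lead_dominates:
  fixes T :: "('a \<Rightarrow> 'k::field) \<Rightarrow> 'b \<Rightarrow> 'k"
  assumes g: "commuting_iso S E S' E' T U" and sg: "simple_graph S E" and x: "x \<in> S"
    and \<delta>: "T (basis_vec x) \<delta> \<noteq> 0"
  shows "dominated E' \<delta> (lead T x)"
proof -
  obtain \<gamma> where \<gamma>: "\<gamma> \<in> S'" "T (basis_vec x) \<gamma> \<noteq> 0"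
    and dom: "\<And>\<delta>. T (basis_vec x) \<delta> \<noteq> 0 \<Longrightarrow> dominated E' \<delta> \<gamma>"
    using dominating_support_vertex[OF g sg graph x] by blast
  have "dominated E' (lead T x) \<gamma>" by (rule dom[OF lead(2)[OF g x]])
  moreover have "\<not> rank (lead T x) < rank \<gamma>" using lead(3)[OF g x \<gamma>(2)] by simp
  ultimately have "dominated E' \<gamma> (lead T x)"
    using rank_strict_mono[OF lead(1)[OF g x] \<gamma>(1)] by auto
  then show ?thesis by (rule dominated_trans[OF dom[OF \<delta>]])
qed

text \<open>The coefficient of the leading vertices in the bracket of T x and T y is a product of two
  nonzero numbers, because the lower-ranked one lies outside the support of the other vector.\<close>
lemma distinct_leads_preserve_nonedge:
  fixes T :: "('a \<Rightarrow> 'k::field) \<Rightarrow> 'b \<Rightarrow> 'k"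
  assumes g: "commuting_iso S E S' E' T U" and x: "x \<in> S" and y: "y \<in> S"
    and nonedge: "{x, y} \<notin> E" and distinct: "lead T x \<noteq> lead T y"
  shows "{lead T x, lead T y} \<notin> E'"
proof
  assume edge: "{lead T x, lead T y} \<in> E'"
  define v where "v = T (basis_vec x)"
  define w where "w = T (basis_vec y)"
  have "wedge E' v w (lead T x, lead T y) = 0"
    using commuting_iso_nonedge_wedge[OF g x y nonedge] unfolding v_def w_def by simp
  then have eq: "v (lead T x) * w (lead T y) = v (lead T y) * w (lead T x)"
    using edge by (simp add: wedge_def)
  have "rank (lead T x) \<noteq> rank (lead T y)"
    using rank_inj lead(1)[OF g x] lead(1)[OF g y] distinct by (auto dest: inj_onD)
  then have "v (lead T y) = 0 \<or> w (lead T x) = 0"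
    using lead(3)[OF g x] lead(3)[OF g y] unfolding v_def w_def by fastforce
  then show False using eq lead(2)[OF g x] lead(2)[OF g y] unfolding v_def w_def by auto
qed

lemma potential_less:
  fixes T T' :: "('a \<Rightarrow> 'k::field) \<Rightarrow> 'b \<Rightarrow> 'k"
  assumes finS: "finite S" and \<alpha>: "\<alpha> \<in> S"
    and same: "\<And>x. x \<noteq> \<alpha> \<Longrightarrow> T' (basis_vec x) = T (basis_vec x)"
    and less: "rank (lead T' \<alpha>) < rank (lead T \<alpha>)"
  shows "potential S T' < potential S T"
proof -
  have "potential S T' = rank (lead T' \<alpha>) + (\<Sum>x\<in>S - {\<alpha>}. rank (lead T' x))"
    unfolding potential_def by (rule sum.remove[OF finS \<alpha>])
  also have "(\<Sum>x\<in>S - {\<alpha>}. rank (lead T' x)) = (\<Sum>x\<in>S - {\<alpha>}. rank (lead T x))"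
    by (rule sum.cong) (auto simp: lead_def same)
  also have "rank (lead T' \<alpha>) + \<dots> < rank (lead T \<alpha>) + \<dots>"
    using less by simp
  also have "\<dots> = potential S T"
    unfolding potential_def by (rule sum.remove[OF finS \<alpha>, symmetric])
  finally show ?thesis .
qed

text \<open>Two vertices with a common leading vertex \<gamma>: subtracting the right multiple of \<beta> from \<alpha>
  kills the \<gamma>-coordinate of T \<alpha> without enlarging its support, so its leading vertex drops.\<close>
lemma shared_lead_potential_decrease:
  fixes T :: "('a \<Rightarrow> 'k::field) \<Rightarrow> 'b \<Rightarrow> 'k"
  assumes g: "commuting_iso S E S' E' T U" and sg: "simple_graph S E"
    and \<alpha>: "\<alpha> \<in> S" and \<beta>: "\<beta> \<in> S" and \<alpha>\<beta>: "\<alpha> \<noteq> \<beta>" and shared: "lead T \<alpha> = lead T \<beta>"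
  obtains T' :: "('a \<Rightarrow> 'k) \<Rightarrow> 'b \<Rightarrow> 'k" and U'
  where "commuting_iso S E S' E' T' U'" and "potential S T' < potential S T"
proof -
  have finS: "finite S" using simple_graph_finite[OF sg] .
  define \<gamma> where "\<gamma> = lead T \<beta>"
  define v where "v = T (basis_vec \<alpha>)"
  define w where "w = T (basis_vec \<beta>)"
  have v\<gamma>: "v \<gamma> \<noteq> 0" and w\<gamma>: "w \<gamma> \<noteq> 0"
    using lead(2)[OF g \<alpha>] lead(2)[OF g \<beta>] shared unfolding v_def w_def \<gamma>_def by auto
  have nbrs: "nbrs E \<beta> - {\<alpha>} \<subseteq> nbrs E \<alpha>"
    using nbrs_subset_of_shared_dominator[OF g sg \<alpha> \<beta>, of \<gamma>] v\<gamma> lead_dominates[OF g sg \<beta>]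
    unfolding v_def \<gamma>_def by blast
  define c where "c = v \<gamma> / w \<gamma>"
  define T' where "T' = T \<circ> transvection c \<alpha> \<beta>"
  have g': "commuting_iso S E S' E' T' (transvection (- c) \<alpha> \<beta> \<circ> U)"
    unfolding T'_def by (rule commuting_iso_compose_transvection[OF g \<alpha>\<beta> \<beta> nbrs])
  have T'_other: "T' (basis_vec x) = T (basis_vec x)" if "x \<noteq> \<alpha>" for x
  proof -
    have "transvection c \<alpha> \<beta> (basis_vec x) = basis_vec x"
      using that by (auto simp: transvection_def basis_vec_apply fun_eq_iff)
    then show ?thesis by (simp add: T'_def)
  qed
  have "transvection c \<alpha> \<beta> (basis_vec \<alpha>) = basis_vec \<alpha> - fscale c (basis_vec \<beta>)"
    using \<alpha>\<beta> by (auto simp: transvection_def basis_vec_apply fun_eq_iff)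
  then have T'_\<alpha>: "T' (basis_vec \<alpha>) = v - fscale c w"
    using commuting_isoD(1)[OF g] unfolding T'_def v_def w_def
    by (simp only: comp_apply flinear_diff flinear_scale)
  have "T' (basis_vec \<alpha>) (lead T' \<alpha>) \<noteq> 0" by (rule lead(2)[OF g' \<alpha>])
  then have vw: "v (lead T' \<alpha>) \<noteq> 0 \<or> w (lead T' \<alpha>) \<noteq> 0" and "lead T' \<alpha> \<noteq> \<gamma>"
    unfolding T'_\<alpha> c_def using w\<gamma> by auto
  then have "rank (lead T' \<alpha>) \<noteq> rank \<gamma>"
    using rank_inj lead(1)[OF g' \<alpha>] lead(1)[OF g \<beta>] unfolding \<gamma>_def by (auto dest: inj_onD)
  moreover have "rank (lead T' \<alpha>) \<le> rank \<gamma>"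
    using vw lead(3)[OF g \<alpha>] lead(3)[OF g \<beta>] shared unfolding v_def w_def \<gamma>_def by auto
  ultimately have "rank (lead T' \<alpha>) < rank (lead T \<alpha>)"
    using shared unfolding \<gamma>_def by simp
  then have "potential S T' < potential S T"
    using potential_less[OF finS \<alpha>, of T' T] T'_other by blast
  with g' show thesis by (rule that)
qed

lemma nonedge_embedding_exists:
  fixes T :: "('a \<Rightarrow> 'k::field) \<Rightarrow> 'b \<Rightarrow> 'k"
  assumes "commuting_iso S E S' E' T U" and sg: "simple_graph S E"
  shows "\<exists>\<sigma>. nonedge_embedding \<sigma> S E S' E'"
  using assms(1)
proof (induction T arbitrary: U rule: measure_induct_rule[where f = "potential S"])
  case (less T)
  show ?case
  proof (cases "inj_on (lead T) S")
    case True
    then have "nonedge_embedding (lead T) S E S' E'"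
      unfolding nonedge_embedding_def
      using lead(1)[OF less.prems] distinct_leads_preserve_nonedge[OF less.prems]
      by (auto dest: inj_onD)
    then show ?thesis by blast
  next
    case False
    then obtain \<alpha> \<beta> where "\<alpha> \<in> S" "\<beta> \<in> S" "\<alpha> \<noteq> \<beta>" "lead T \<alpha> = lead T \<beta>"
      unfolding inj_on_def by blast
    then obtain T' :: "('a \<Rightarrow> 'k) \<Rightarrow> 'b \<Rightarrow> 'k" and U' where g': "commuting_iso S E S' E' T' U'" and smaller: "potential S T' < potential S T"
      by (rule shared_lead_potential_decrease[OF less.prems sg])
    show ?thesis by (rule less.IH[OF smaller g'])
  qed
qed

end

lemma commuting_iso_nonedge_embedding:
  fixes T :: "('a \<Rightarrow> 'k::field) \<Rightarrow> 'b \<Rightarrow> 'k"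
  assumes g: "commuting_iso S E S' E' T U" and sg: "simple_graph S E" and sg': "simple_graph S' E'"
  shows "\<exists>\<sigma>. nonedge_embedding \<sigma> S E S' E'"
proof -
  obtain rank :: "'b \<Rightarrow> nat" where "inj_on rank S'"
    and "\<And>\<delta> \<gamma>. \<delta> \<in> S' \<Longrightarrow> \<gamma> \<in> S' \<Longrightarrow> dominated E' \<delta> \<gamma> \<Longrightarrow> \<not> dominated E' \<gamma> \<delta> \<Longrightarrow> rank \<delta> < rank \<gamma>"
    by (rule domination_ranking_exists[OF simple_graph_finite[OF sg'], where E = E']) blast
  then interpret domination_ranking S' E' rank
    using sg' by unfold_locales
  show ?thesis by (rule nonedge_embedding_exists[OF g sg])
qed

section \<open>The induced map on generators\<close>

definition nla_hom :: "'a set \<Rightarrow> 'a set set \<Rightarrow> 'b set \<Rightarrow> 'b set set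
    \<Rightarrow> (('a, 'k::field) nla \<Rightarrow> ('b, 'k) nla) \<Rightarrow> bool" where
  "nla_hom S E S' E' f \<longleftrightarrow> (\<forall>p\<in>nla_carrier S E. f p \<in> nla_carrier S' E') \<and>
     (\<forall>p\<in>nla_carrier S E. \<forall>q\<in>nla_carrier S E. f (nla_add p q) = nla_add (f p) (f q)) \<and>
     (\<forall>c. \<forall>p\<in>nla_carrier S E. f (nla_smul c p) = nla_smul c (f p)) \<and>
     (\<forall>p\<in>nla_carrier S E. \<forall>q\<in>nla_carrier S E.
        f (nla_bracket E p q) = nla_bracket E' (f p) (f q))"

lemma nla_homD:
  assumes "nla_hom S E S' E' f"
  shows "p \<in> nla_carrier S E \<Longrightarrow> f p \<in> nla_carrier S' E'"
    and "p \<in> nla_carrier S E \<Longrightarrow> q \<in> nla_carrier S E \<Longrightarrow> f (nla_add p q) = nla_add (f p) (f q)"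
    and "p \<in> nla_carrier S E \<Longrightarrow> f (nla_smul c p) = nla_smul c (f p)"
    and "p \<in> nla_carrier S E \<Longrightarrow> q \<in> nla_carrier S E \<Longrightarrow>
      f (nla_bracket E p q) = nla_bracket E' (f p) (f q)"
  using assms unfolding nla_hom_def by auto

lemma nla_carrierI:
  assumes "\<And>x. x \<notin> S \<Longrightarrow> fst p x = 0" and "\<And>x y. snd p (x, y) = - snd p (y, x)"
    and "\<And>x y. {x, y} \<notin> E \<Longrightarrow> snd p (x, y) = 0"
  shows "p \<in> nla_carrier S E"
proof -
  obtain u w where p: "p = (u, w)" by (cases p)
  show ?thesis using assms unfolding p nla_carrier_def mem_Collect_eq prod.case fst_conv snd_conv
    by blast
qed

lemma nla_carrierD:
  assumes "p \<in> nla_carrier S E"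
  shows "x \<notin> S \<Longrightarrow> fst p x = 0" and "snd p (x, y) = - snd p (y, x)"
    and "{x, y} \<notin> E \<Longrightarrow> snd p (x, y) = 0"
proof -
  obtain u w where p: "p = (u, w)" by (cases p)
  note facts = assms[unfolded p nla_carrier_def mem_Collect_eq prod.case]
  show "x \<notin> S \<Longrightarrow> fst p x = 0" and "snd p (x, y) = - snd p (y, x)"
    and "{x, y} \<notin> E \<Longrightarrow> snd p (x, y) = 0"
    unfolding p fst_conv snd_conv using facts by blast+
qed

lemma nla_carrier_add:
  assumes "p \<in> nla_carrier S E" "q \<in> nla_carrier S E"
  shows "nla_add p q \<in> nla_carrier S E"
proof (rule nla_carrierI)
  show "snd (nla_add p q) (x, y) = - snd (nla_add p q) (y, x)" for x y
    using nla_carrierD(2)[OF assms(1), of x y] nla_carrierD(2)[OF assms(2), of x y]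
    by (simp add: nla_add_def)
qed (simp_all add: nla_add_def nla_carrierD(1,3)[OF assms(1)] nla_carrierD(1,3)[OF assms(2)])

lemma nla_carrier_smul:
  assumes "p \<in> nla_carrier S E"
  shows "nla_smul c p \<in> nla_carrier S E"
proof (rule nla_carrierI)
  show "snd (nla_smul c p) (x, y) = - snd (nla_smul c p) (y, x)" for x y
    using nla_carrierD(2)[OF assms, of x y] by (simp add: nla_smul_def)
qed (simp_all add: nla_smul_def nla_carrierD(1,3)[OF assms])

lemma nla_carrier_bracket: "nla_bracket E p q \<in> nla_carrier S E"
  by (auto simp: nla_carrier_def nla_bracket_def insert_commute)

lemma generator_in_nla_carrier: "(u, \<lambda>_. 0) \<in> nla_carrier S E \<longleftrightarrow> u \<in> supported_on S"
  by (auto simp: nla_carrier_def supported_on_def)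

lemma nla_bracket_generators: "nla_bracket E (u, \<lambda>_. 0) (v, \<lambda>_. 0) = (\<lambda>_. 0, wedge E u v)"
  by (simp add: nla_bracket_def wedge_def fun_eq_iff split: prod.split)

lemma nla_hom_zero:
  assumes "nla_hom S E S' E' f"
  shows "f (\<lambda>_. 0, \<lambda>_. 0) = (\<lambda>_. 0, \<lambda>_. 0)"
proof -
  have "(\<lambda>_. 0, \<lambda>_. 0) \<in> nla_carrier S E" by (simp add: nla_carrier_def)
  from nla_homD(3)[OF assms this, of 0] show ?thesis by (simp add: nla_smul_def)
qed

lemma nla_hom_inv_into:
  fixes f :: "('a, 'k::field) nla \<Rightarrow> ('b, 'k) nla"
  assumes f: "nla_hom S E S' E' f" and bij: "bij_betw f (nla_carrier S E) (nla_carrier S' E')"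
  shows "nla_hom S' E' S E (inv_into (nla_carrier S E) f)"
proof -
  let ?C = "nla_carrier S E" and ?g = "inv_into (nla_carrier S E) f"
  have gC: "?g a \<in> ?C" if "a \<in> nla_carrier S' E'" for a
    using bij that by (metis bij_betw_imp_surj_on inv_into_into)
  have fg: "f (?g a) = a" if "a \<in> nla_carrier S' E'" for a
    using bij that by (metis bij_betw_inv_into_right)
  have gf: "?g (f p) = p" if "p \<in> ?C" for p
    using bij that by (metis bij_betw_inv_into_left)
  show ?thesis unfolding nla_hom_def
  proof (intro conjI ballI allI)
    fix a b :: "('b, 'k) nla" assume a: "a \<in> nla_carrier S' E'" and b: "b \<in> nla_carrier S' E'"
    show "?g (nla_add a b) = nla_add (?g a) (?g b)"
      using nla_homD(2)[OF f gC[OF a] gC[OF b]] fg a b gf[OF nla_carrier_add[OF gC[OF a] gC[OF b]]]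
      by simp
    have "nla_bracket E' a b = f (nla_bracket E (?g a) (?g b))"
      using nla_homD(4)[OF f gC[OF a] gC[OF b]] fg a b by simp
    then show "?g (nla_bracket E' a b) = nla_bracket E (?g a) (?g b)"
      using gf[OF nla_carrier_bracket] by simp
  next
    fix c and a :: "('b, 'k) nla" assume a: "a \<in> nla_carrier S' E'"
    show "?g (nla_smul c a) = nla_smul c (?g a)"
      using nla_homD(3)[OF f gC[OF a]] fg[OF a] gf[OF nla_carrier_smul[OF gC[OF a]]] by simp
  qed (rule gC)
qed

definition restrict_to_edges :: "('x \<times> 'x \<Rightarrow> 'k::zero) \<Rightarrow> 'x set set \<Rightarrow> 'x \<times> 'x \<Rightarrow> 'k" where
  "restrict_to_edges w F = (\<lambda>(x, y). if {x, y} \<in> F then w (x, y) else 0)"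

lemma restrict_to_edges_in_nla_carrier:
  assumes w: "(\<lambda>_. 0, w) \<in> nla_carrier S E"
  shows "(\<lambda>_. 0, restrict_to_edges w F) \<in> nla_carrier S E"
proof (rule nla_carrierI)
  show "snd (\<lambda>_. 0, restrict_to_edges w F) (x, y) = - snd (\<lambda>_. 0, restrict_to_edges w F) (y, x)" for x y
    using nla_carrierD(2)[OF w, of x y] by (simp add: restrict_to_edges_def insert_commute)
  show "snd (\<lambda>_. 0, restrict_to_edges w F) (x, y) = 0" if "{x, y} \<notin> E" for x y
    using nla_carrierD(3)[OF w that] by (simp add: restrict_to_edges_def)
qed simp

lemma restrict_to_single_edge_eq_bracket:
  fixes w :: "'x \<times> 'x \<Rightarrow> 'k::field"
  assumes skew: "w (b, a) = - w (a, b)" and ab: "a \<noteq> b" "{a, b} \<in> E"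
  shows "(\<lambda>_. 0, restrict_to_edges w {{a, b}}) =
    nla_smul (w (a, b)) (nla_bracket E (basis_vec a, \<lambda>_. 0) (basis_vec b, \<lambda>_. 0))"
proof -
  have "restrict_to_edges w {{a, b}} (x, y) = w (a, b) * wedge E (basis_vec a) (basis_vec b) (x, y)"
    for x y
  proof (cases "{x, y} = {a, b}")
    case True
    then have "x = a \<and> y = b \<or> x = b \<and> y = a" by (auto simp: doubleton_eq_iff)
    then show ?thesis
      using ab skew by (auto simp: restrict_to_edges_def wedge_def basis_vec_apply)
  next
    case False
    then show ?thesis using ab by (auto simp: restrict_to_edges_def wedge_def basis_vec_apply)
  qed
  then show ?thesis by (simp add: nla_smul_def nla_bracket_generators fun_eq_iff)
qed

text \<open>An element (0, w) is a sum of brackets of generators, one per edge, so a homomorphism maps it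
  into the centre component.\<close>
lemma nla_hom_central:
  fixes f :: "('a, 'k::field) nla \<Rightarrow> ('b, 'k) nla"
  assumes f: "nla_hom S E S' E' f" and sg: "simple_graph S E"
    and w: "(\<lambda>_. 0, w) \<in> nla_carrier S E"
  shows "fst (f (\<lambda>_. 0, w)) = (\<lambda>_. 0)"
proof -
  have single: "fst (f (\<lambda>_. 0, restrict_to_edges w {e})) = (\<lambda>_. 0)" if e: "e \<in> E" for e
  proof -
    obtain a b where ab: "a \<in> S" "b \<in> S" "a \<noteq> b" and e_ab: "e = {a, b}"
      using sg e unfolding simple_graph_def by blast
    have gens: "(basis_vec a, \<lambda>_. 0) \<in> nla_carrier S E" "(basis_vec b, \<lambda>_. 0) \<in> nla_carrier S E"
      using ab by (simp_all add: generator_in_nla_carrier basis_vec_supported_on)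
    have "w (b, a) = - w (a, b)" using nla_carrierD(2)[OF w, of b a] by simp
    then have "(\<lambda>_. 0, restrict_to_edges w {e}) =
        nla_smul (w (a, b)) (nla_bracket E (basis_vec a, \<lambda>_. 0) (basis_vec b, \<lambda>_. 0))"
      unfolding e_ab by (rule restrict_to_single_edge_eq_bracket[OF _ ab(3) e[unfolded e_ab]])
    then have "f (\<lambda>_. 0, restrict_to_edges w {e}) =
        nla_smul (w (a, b)) (nla_bracket E' (f (basis_vec a, \<lambda>_. 0)) (f (basis_vec b, \<lambda>_. 0)))"
      by (simp add: nla_homD(3)[OF f nla_carrier_bracket] nla_homD(4)[OF f gens])
    then show ?thesis by (simp add: nla_smul_def nla_bracket_def)
  qed
  have partial: "fst (f (\<lambda>_. 0, restrict_to_edges w F)) = (\<lambda>_. 0)" if "F \<subseteq> E" for F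
    using finite_subset[OF that simple_graph_finite_edges[OF sg]] that
  proof (induction F rule: finite_induct)
    case empty
    then show ?case using nla_hom_zero[OF f] by (simp add: restrict_to_edges_def)
  next
    case (insert e F)
    have "(\<lambda>_. 0, restrict_to_edges w (insert e F)) =
        nla_add (\<lambda>_. 0, restrict_to_edges w F) (\<lambda>_. 0, restrict_to_edges w {e})"
      using insert.hyps(2) by (auto simp: nla_add_def restrict_to_edges_def fun_eq_iff)
    then show ?case
      using nla_homD(2)[OF f restrict_to_edges_in_nla_carrier[OF w] restrict_to_edges_in_nla_carrier[OF w]]
        insert single by (simp add: nla_add_def)
  qed
  have "restrict_to_edges w E = w"
  proof
    fix p :: "'a \<times> 'a"
    obtain x y where p: "p = (x, y)" by (cases p)
    show "restrict_to_edges w E p = w p"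
      using nla_carrierD(3)[OF w, of x y] unfolding p by (simp add: restrict_to_edges_def)
  qed
  then show ?thesis using partial[OF order_refl] by simp
qed

definition zero_outside :: "'x set \<Rightarrow> ('x \<Rightarrow> 'k::zero) \<Rightarrow> 'x \<Rightarrow> 'k" where
  "zero_outside S u = (\<lambda>x. if x \<in> S then u x else 0)"

lemma zero_outside_in_nla_carrier: "(zero_outside S u, \<lambda>_. 0) \<in> nla_carrier S E"
  by (simp add: generator_in_nla_carrier zero_outside_def supported_on_def)

lemma zero_outside_id: "u \<in> supported_on S \<Longrightarrow> zero_outside S u = u"
  by (auto simp: zero_outside_def supported_on_def fun_eq_iff)

text \<open>The map induced on V \<cong> n(S,E)/[n,n]. Arguments are first cut down to S, so that the map is
  linear on all functions and not only on V.\<close>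
definition generator_map :: "'a set \<Rightarrow> (('a, 'k::field) nla \<Rightarrow> ('b, 'k) nla) \<Rightarrow> ('a \<Rightarrow> 'k) \<Rightarrow> 'b \<Rightarrow> 'k" where
  "generator_map S f u = fst (f (zero_outside S u, \<lambda>_. 0))"

lemma flinear_generator_map:
  fixes f :: "('a, 'k::field) nla \<Rightarrow> ('b, 'k) nla"
  assumes f: "nla_hom S E S' E' f"
  shows "flinear (generator_map S f)"
proof (rule flinearI)
  fix u v :: "'a \<Rightarrow> 'k"
  have split: "(zero_outside S (u + v), \<lambda>_. 0) =
      nla_add (zero_outside S u, \<lambda>_. 0) (zero_outside S v, \<lambda>_. 0)"
    by (simp add: nla_add_def zero_outside_def fun_eq_iff)
  show "generator_map S f (u + v) = generator_map S f u + generator_map S f v"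
    unfolding generator_map_def split nla_homD(2)[OF f zero_outside_in_nla_carrier zero_outside_in_nla_carrier]
    by (simp add: nla_add_def plus_fun_def)
next
  fix c and u :: "'a \<Rightarrow> 'k"
  have split: "(zero_outside S (fscale c u), \<lambda>_. 0) = nla_smul c (zero_outside S u, \<lambda>_. 0)"
    by (simp add: nla_smul_def zero_outside_def fun_eq_iff)
  show "generator_map S f (fscale c u) = fscale c (generator_map S f u)"
    unfolding generator_map_def split nla_homD(3)[OF f zero_outside_in_nla_carrier]
    by (simp add: nla_smul_def fscale_def)
qed

lemma generator_map_supported_on:
  fixes f :: "('a, 'k::field) nla \<Rightarrow> ('b, 'k) nla"
  assumes "nla_hom S E S' E' f"
  shows "generator_map S f u \<in> supported_on S'"
  using nla_carrierD(1)[OF nla_homD(1)[OF assms zero_outside_in_nla_carrier]]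
  unfolding generator_map_def supported_on_def by blast

lemma generator_map_inverse:
  fixes f :: "('a, 'k::field) nla \<Rightarrow> ('b, 'k) nla"
  assumes f: "nla_hom S E S' E' f" and g: "nla_hom S' E' S E g"
    and gf: "\<And>p. p \<in> nla_carrier S E \<Longrightarrow> g (f p) = p" and sg': "simple_graph S' E'"
    and u: "u \<in> supported_on S"
  shows "generator_map S' g (generator_map S f u) = u"
proof -
  have uC: "(u, \<lambda>_. 0) \<in> nla_carrier S E" using u by (simp add: generator_in_nla_carrier)
  obtain a b where ab: "f (u, \<lambda>_. 0) = (a, b)" by (cases "f (u, \<lambda>_. 0)")
  have abC: "(a, b) \<in> nla_carrier S' E'" using nla_homD(1)[OF f uC] ab by simp
  have aV: "a \<in> supported_on S'" using nla_carrierD(1)[OF abC] by (simp add: supported_on_def)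
  have aC: "(a, \<lambda>_. 0) \<in> nla_carrier S' E'" using aV by (simp add: generator_in_nla_carrier)
  have bC: "(\<lambda>_. 0, b) \<in> nla_carrier S' E'"
  proof (rule nla_carrierI)
    show "snd (\<lambda>_. 0, b) (x, y) = - snd (\<lambda>_. 0, b) (y, x)" for x y
      using nla_carrierD(2)[OF abC, of x y] by simp
    show "snd (\<lambda>_. 0, b) (x, y) = 0" if "{x, y} \<notin> E'" for x y
      using nla_carrierD(3)[OF abC that] by simp
  qed simp
  have "(u, \<lambda>_. 0) = g (nla_add (a, \<lambda>_. 0) (\<lambda>_. 0, b))"
    using gf[OF uC] ab by (simp add: nla_add_def)
  also have "\<dots> = nla_add (g (a, \<lambda>_. 0)) (g (\<lambda>_. 0, b))" by (rule nla_homD(2)[OF g aC bC])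
  finally have "u = fst (g (a, \<lambda>_. 0))"
    using nla_hom_central[OF g sg' bC] by (simp add: nla_add_def)
  then show ?thesis
    unfolding generator_map_def zero_outside_id[OF u] ab by (simp add: zero_outside_id[OF aV])
qed

lemma generator_map_wedge_iff:
  fixes f :: "('a, 'k::field) nla \<Rightarrow> ('b, 'k) nla"
  assumes f: "nla_hom S E S' E' f" and inj: "inj_on f (nla_carrier S E)"
    and u: "u \<in> supported_on S" and v: "v \<in> supported_on S"
  shows "wedge E u v = 0 \<longleftrightarrow> wedge E' (generator_map S f u) (generator_map S f v) = 0"
proof -
  have uvC: "(u, \<lambda>_. 0) \<in> nla_carrier S E" "(v, \<lambda>_. 0) \<in> nla_carrier S E"
    using u v by (simp_all add: generator_in_nla_carrier)
  have zeroC: "(\<lambda>_. 0, 0) \<in> nla_carrier S E" by (simp add: nla_carrier_def)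
  have f0: "f (\<lambda>_. 0, 0) = (\<lambda>_. 0, 0)" using nla_hom_zero[OF f] by (simp add: zero_fun_def)
  have image: "f (\<lambda>_. 0, wedge E u v) = (\<lambda>_. 0, wedge E' (generator_map S f u) (generator_map S f v))"
    using nla_homD(4)[OF f uvC]
    unfolding nla_bracket_generators generator_map_def zero_outside_id[OF u] zero_outside_id[OF v]
    by (simp add: nla_bracket_def wedge_def)
  show ?thesis
  proof
    assume "wedge E u v = 0"
    then show "wedge E' (generator_map S f u) (generator_map S f v) = 0" using image f0 by simp
  next
    assume "wedge E' (generator_map S f u) (generator_map S f v) = 0"
    then have "f (\<lambda>_. 0, wedge E u v) = f (\<lambda>_. 0, 0)" using image f0 by simp
    then have "(\<lambda>_. 0, wedge E u v) = ((\<lambda>_. 0, 0) :: ('a, 'k) nla)"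
      using inj_onD[OF inj _ _ zeroC] nla_carrier_bracket[of E "(u, \<lambda>_. 0)" "(v, \<lambda>_. 0)" S]
      unfolding nla_bracket_generators by blast
    then show "wedge E u v = 0" by simp
  qed
qed

lemma nla_iso_commuting_iso:
  fixes f :: "('a, 'k::field) nla \<Rightarrow> ('b, 'k) nla"
  assumes iso: "nla_iso S E S' E' f" and sg: "simple_graph S E" and sg': "simple_graph S' E'"
  defines "g \<equiv> inv_into (nla_carrier S E) f"
  shows "commuting_iso S E S' E' (generator_map S f) (generator_map S' g)"
proof -
  have bij: "bij_betw f (nla_carrier S E) (nla_carrier S' E')" using iso by (simp add: nla_iso_def)
  have f: "nla_hom S E S' E' f"
    using iso bij_betwE[OF bij] unfolding nla_iso_def nla_hom_def by blast
  have g: "nla_hom S' E' S E g" unfolding g_def by (rule nla_hom_inv_into[OF f bij])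
  have gf: "g (f p) = p" if "p \<in> nla_carrier S E" for p
    unfolding g_def using bij_betw_inv_into_left[OF bij that] .
  have fg: "f (g p) = p" if "p \<in> nla_carrier S' E'" for p
    unfolding g_def using bij_betw_inv_into_right[OF bij that] .
  show ?thesis
    unfolding commuting_iso_def
  proof (intro conjI allI ballI)
    show "flinear (generator_map S f)" by (rule flinear_generator_map[OF f])
    show "flinear (generator_map S' g)" by (rule flinear_generator_map[OF g])
    show "generator_map S f u \<in> supported_on S'" for u by (rule generator_map_supported_on[OF f])
    show "generator_map S' g u \<in> supported_on S" for u by (rule generator_map_supported_on[OF g])
    show "generator_map S' g (generator_map S f u) = u" if "u \<in> supported_on S" for u
      by (rule generator_map_inverse[OF f g gf sg' that])
    show "generator_map S f (generator_map S' g u) = u" if "u \<in> supported_on S'" for u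
      by (rule generator_map_inverse[OF g f fg sg that])
    show "wedge E u v = 0 \<longleftrightarrow> wedge E' (generator_map S f u) (generator_map S f v) = 0"
      if "u \<in> supported_on S" "v \<in> supported_on S" for u v
      by (rule generator_map_wedge_iff[OF f bij_betw_imp_inj_on[OF bij] that])
  qed
qed

section \<open>Counting non-edges\<close>

lemma image_eq_of_injections:
  assumes "finite A" "finite B" "inj_on f A" "f ` A \<subseteq> B" "inj_on g B" "g ` B \<subseteq> A"
  shows "f ` A = B"
proof -
  have "card B \<le> card A" using card_inj_on_le[OF assms(5,6,1)] .
  then show ?thesis
    using card_subset_eq[OF assms(2,4)] card_image[OF assms(3)] card_inj_on_le[OF assms(3,4,2)] by simp
qed

definition nonedges :: "'x set \<Rightarrow> 'x set set \<Rightarrow> 'x set set" where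
  "nonedges S E = {{x, y} | x y. x \<in> S \<and> y \<in> S \<and> x \<noteq> y \<and> {x, y} \<notin> E}"

lemma nonedges_subset_Pow: "nonedges S E \<subseteq> Pow S"
  by (auto simp: nonedges_def)

lemma finite_nonedges: "finite S \<Longrightarrow> finite (nonedges S E)"
  by (rule finite_subset[OF nonedges_subset_Pow]) simp

lemma nonedge_embedding_nonedges:
  assumes \<sigma>: "nonedge_embedding \<sigma> S E S' E'"
  shows "inj_on (image \<sigma>) (nonedges S E)" and "image \<sigma> ` nonedges S E \<subseteq> nonedges S' E'"
proof -
  have inj: "inj_on \<sigma> S" and into: "\<sigma> ` S \<subseteq> S'"
    and nonedge: "\<And>x y. x \<in> S \<Longrightarrow> y \<in> S \<Longrightarrow> x \<noteq> y \<Longrightarrow> {x, y} \<notin> E \<Longrightarrow> {\<sigma> x, \<sigma> y} \<notin> E'"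
    using \<sigma> unfolding nonedge_embedding_def by auto
  show "inj_on (image \<sigma>) (nonedges S E)"
    using inj_on_image_Pow[OF inj] nonedges_subset_Pow by (rule inj_on_subset)
  show "image \<sigma> ` nonedges S E \<subseteq> nonedges S' E'"
  proof
    fix e assume "e \<in> image \<sigma> ` nonedges S E"
    then obtain x y where xy: "x \<in> S" "y \<in> S" "x \<noteq> y" "{x, y} \<notin> E" and e: "e = {\<sigma> x, \<sigma> y}"
      unfolding nonedges_def by auto
    have "\<sigma> x \<noteq> \<sigma> y" using inj xy by (auto dest: inj_onD)
    then show "e \<in> nonedges S' E'"
      using nonedge[OF xy] into xy unfolding e nonedges_def by blast
  qed
qed

text \<open>Mutual embeddings preserving non-edges are bijective on vertices and, by counting,
  on non-edges, hence they also preserve edges.\<close>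
lemma graph_iso_of_nonedge_embeddings:
  assumes sg: "simple_graph S E" and sg': "simple_graph S' E'"
    and \<sigma>: "nonedge_embedding \<sigma> S E S' E'" and \<rho>: "nonedge_embedding \<rho> S' E' S E"
  shows "graph_iso S E S' E'"
proof -
  have finS: "finite S" and finS': "finite S'" using sg sg' simple_graph_finite by auto
  have inj: "inj_on \<sigma> S" and into: "\<sigma> ` S \<subseteq> S'"
    and nonedge: "\<And>x y. x \<in> S \<Longrightarrow> y \<in> S \<Longrightarrow> x \<noteq> y \<Longrightarrow> {x, y} \<notin> E \<Longrightarrow> {\<sigma> x, \<sigma> y} \<notin> E'"
    using \<sigma> unfolding nonedge_embedding_def by auto
  have \<rho>_inj: "inj_on \<rho> S'" and \<rho>_into: "\<rho> ` S' \<subseteq> S"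
    using \<rho> by (simp_all add: nonedge_embedding_def)
  have bij: "bij_betw \<sigma> S S'"
    unfolding bij_betw_def
    using inj image_eq_of_injections[OF finS finS' inj into \<rho>_inj \<rho>_into] by simp
  have nonedges_image: "image \<sigma> ` nonedges S E = nonedges S' E'"
    by (rule image_eq_of_injections[OF finite_nonedges[OF finS] finite_nonedges[OF finS']
          nonedge_embedding_nonedges(1,2)[OF \<sigma>] nonedge_embedding_nonedges(1,2)[OF \<rho>]])
  have "{x, y} \<in> E \<longleftrightarrow> {\<sigma> x, \<sigma> y} \<in> E'" if x: "x \<in> S" and y: "y \<in> S" for x y
  proof (cases "x = y")
    case True
    then show ?thesis using simple_graph_no_loop[OF sg] simple_graph_no_loop[OF sg'] by simp
  next
    case False
    have "{x, y} \<notin> E" if "{\<sigma> x, \<sigma> y} \<notin> E'"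
    proof -
      have "\<sigma> x \<noteq> \<sigma> y" using inj x y False by (auto dest: inj_onD)
      then have "\<sigma> ` {x, y} \<in> nonedges S' E'"
        using that into x y unfolding nonedges_def by auto
      then obtain e where e: "e \<in> nonedges S E" "\<sigma> ` e = \<sigma> ` {x, y}"
        unfolding nonedges_image[symmetric] by auto
      have "e \<in> Pow S" "{x, y} \<in> Pow S" using e(1) nonedges_subset_Pow x y by auto
      then have "e = {x, y}" using inj_onD[OF inj_on_image_Pow[OF inj] e(2)] by blast
      then show ?thesis using e(1) unfolding nonedges_def by auto
    qed
    then show ?thesis using nonedge[OF x y False] by blast
  qed
  then show ?thesis unfolding graph_iso_def using bij by blast
qed

theorem theorem1p1:
  fixes S :: "'a set" and E :: "'a set set" and S' :: "'b set" and E' :: "'b set set"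
    and f :: "('a, 'k::field) nla \<Rightarrow> ('b, 'k) nla"
  assumes "(2::'k) \<noteq> 0"
    and "simple_graph S E" and "simple_graph S' E'"
    and "nla_iso S E S' E' f"
  shows "graph_iso S E S' E'"
proof -
  note T = nla_iso_commuting_iso[OF assms(4,2,3)]
  obtain \<sigma> where "nonedge_embedding \<sigma> S E S' E'"
    using commuting_iso_nonedge_embedding[OF T assms(2,3)] by blast
  moreover obtain \<rho> where "nonedge_embedding \<rho> S' E' S E"
    using commuting_iso_nonedge_embedding[OF commuting_iso_sym[OF T] assms(3,2)] by blast
  ultimately show ?thesis by (rule graph_iso_of_nonedge_embeddings[OF assms(2,3)])
qed

end
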